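(* Let a product two-action game with $m$ players and characteristic tuple $(\underline v,\sigma^1,\dots,\sigma^m)$ be given. Let $\pi\in S_m$ with $F(\pi)\neq\emptyset$, and for $\underline\gamma\in EC(\pi)$ define the increment map $\mathrm{Inc}(\underline\gamma):F(\pi)\to\{0,1\}$ by $$\mathrm{Inc}(\underline\gamma,i):=\Bigl(1+\gamma^i+v_i+|L_0(\underline\gamma)\setminus\{i\}|+\sum_{j\in\mathcal A\setminus F(\pi)}\chi\bigl(\sigma^j(\pi(j)),\sigma^j(i)\bigr)\Bigr)\bmod 2,$$ where $\chi:\mathbb R\times\mathbb R\to\{0,1\}$ is given by $\chi(a,b)=1$ iff $a\ge b$. Then: (i) $\underline\gamma\in EC(\pi)$ is a Nash equilibrium if and only if $\mathrm{Inc}(\underline\gamma,i)=0$ for all $i\in F(\pi)$. (ii) Let $g(\pi)\in EC(\pi)$ be the point with $\gamma^i=1$ for all $i\in F(\pi)$. The map $\underline\gamma\mapsto\mathrm{Inc}(\underline\gamma)$ on $EC(\pi)$ takes only two values: the map $\mathrm{Inc}(g(\pi))$ and its opposite $i\mapsto (1+\mathrm{Inc}(g(\pi),i))\bmod 2$. Moreover $\mathrm{Inc}(\underline\gamma)=\mathrm{Inc}(g(\pi))$ if and only if $|L_0(\underline\gamma)|$ is even. (iii) Either $EC(\pi)$ contains no Nash equilibrium, or exactly half of its elements are Nash equilibria.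
   Context: Fix an integer $m\ge 1$ and $\mathcal A=\{1,\dots,m\}$. A two-action game is a finite game in normal form with player set $\mathcal A$ in which each player $i$ has exactly two pure strategies $s^i_0,s^i_1$, together with utility functions $U^i:S\to\mathbb R$, where $S=\prod_{i\in\mathcal A}\{s^i_0,s^i_1\}$. A mixed strategy combination is identified with $\underline\gamma=(\gamma^1,\dots,\gamma^m)\in[0,1]^m$, where $\gamma^i$ is the probability with which player $i$ plays $s^i_1$. The expected utility $V^i$ is the multilinear extension $V^i(\underline\gamma)=\sum_{(j_1,\dots,j_m)\in\{0,1\}^m}\prod_{k=1}^m p_k(j_k)\,U^i(s^1_{j_1},\dots,s^m_{j_m})$ with $p_k(1)=\gamma^k$, $p_k(0)=1-\gamma^k$. Write $\underline\gamma^{-i}=(\gamma^j)_{j\ne i}$ and $\lambda^i(\underline\gamma^{-i}):=V^i(\underline\gamma)|_{\gamma^i=1}-V^i(\underline\gamma)|_{\gamma^i=0}$. A Nash equilibrium is a point $\underline\gamma\in[0,1]^m$ such that for every $i$: $\lambda^i(\underline\gamma^{-i})=0$ if $0<\gamma^i<1$; $\lambda^i(\underline\gamma^{-i})\le 0$ if $\gamma^i=0$; $\lambda^i(\underline\gamma^{-i})\ge 0$ if $\gamma^i=1$. For $\underline\gamma$ put $L_0(\underline\gamma)=\{i:\gamma^i=0\}$, $L_1(\underline\gamma)=\{i:\gamma^i=1\}$, $L(\underline\gamma)=L_0(\underline\gamma)\cup L_1(\underline\gamma)$. A two-action game is a product two-action game if there exist $\underline v=(v_1,\dots,v_m)\in\{0,1\}^m$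 and numbers $a^i_j\in(0,1)$ for $i,j\in\mathcal A$, $i\ne j$, with $a^{i_1}_j\neq a^{i_2}_j$ whenever $i_1\neq i_2$ and both differ from $j$, such that $\lambda^i(\underline\gamma^{-i})=(-1)^{v_i}\prod_{j\in\mathcal A\setminus\{i\}}(\gamma^j-a^i_j)$ for every $i\in\mathcal A$. For $j\in\mathcal A$ the $j$-th associated permutation $\sigma^j\in S_m$ is the unique permutation with $\sigma^j(j)=j$ such that for $i,i'\in\mathcal A\setminus\{j\}$ one has $\sigma^j(i)<\sigma^j(i')$ iff $a^i_j>a^{i'}_j$. The tuple $(\underline v,\sigma^1,\dots,\sigma^m)$ is the characteristic tuple of the game. For $\pi\in S_m$, $F(\pi)=\{i\in\mathcal A:\pi(i)=i\}$ and $EC(\pi):=\{\underline\gamma\in[0,1]^m \mid L(\underline\gamma)=F(\pi),\ \gamma^j=a^{\pi(j)}_j \text{ for all } j\notin F(\pi)\}$. *)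

theory Defs
  imports Complex_Main "HOL-Library.FuncSet" "HOL-Combinatorics.Permutations"
begin

text \<open>A pure strategy profile is an extensional function
  {1..m} -> bool (True = strategy s_1). A mixed strategy combination is an
  extensional function {1..m} -> [0,1] (probability of s_1).\<close>

definition profiles :: "nat \<Rightarrow> (nat \<Rightarrow> bool) set" where
  "profiles m = PiE {1..m} (\<lambda>_. UNIV)"

definition mixed :: "nat \<Rightarrow> (nat \<Rightarrow> real) set" where
  "mixed m = PiE {1..m} (\<lambda>_. {0..1})"

definition exp_util :: "nat \<Rightarrow> (nat \<Rightarrow> (nat \<Rightarrow> bool) \<Rightarrow> real) \<Rightarrow> nat \<Rightarrow> (nat \<Rightarrow> real) \<Rightarrow> real" where
  "exp_util m U i \<gamma> =
     (\<Sum>s\<in>profiles m. (\<Prod>k\<in>{1..m}. if s k then \<gamma> k else 1 - \<gamma> k) * U i s)"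

definition lam :: "nat \<Rightarrow> (nat \<Rightarrow> (nat \<Rightarrow> bool) \<Rightarrow> real) \<Rightarrow> nat \<Rightarrow> (nat \<Rightarrow> real) \<Rightarrow> real" where
  "lam m U i \<gamma> = exp_util m U i (\<gamma>(i := 1)) - exp_util m U i (\<gamma>(i := 0))"

definition nash :: "nat \<Rightarrow> (nat \<Rightarrow> (nat \<Rightarrow> bool) \<Rightarrow> real) \<Rightarrow> (nat \<Rightarrow> real) \<Rightarrow> bool" where
  "nash m U \<gamma> \<longleftrightarrow> \<gamma> \<in> mixed m \<and>
     (\<forall>i\<in>{1..m}. (0 < \<gamma> i \<and> \<gamma> i < 1 \<longrightarrow> lam m U i \<gamma> = 0)
                \<and> (\<gamma> i = 0 \<longrightarrow> lam m U i \<gamma> \<le> 0)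
                \<and> (\<gamma> i = 1 \<longrightarrow> lam m U i \<gamma> \<ge> 0))"

definition L0 :: "nat \<Rightarrow> (nat \<Rightarrow> real) \<Rightarrow> nat set" where
  "L0 m \<gamma> = {i\<in>{1..m}. \<gamma> i = 0}"

definition L1 :: "nat \<Rightarrow> (nat \<Rightarrow> real) \<Rightarrow> nat set" where
  "L1 m \<gamma> = {i\<in>{1..m}. \<gamma> i = 1}"

definition Lset :: "nat \<Rightarrow> (nat \<Rightarrow> real) \<Rightarrow> nat set" where
  "Lset m \<gamma> = L0 m \<gamma> \<union> L1 m \<gamma>"

text \<open>Product two-action game with data v (values in {0,1}) and a i j = a^i_j.\<close>
definition product_game ::
  "nat \<Rightarrow> (nat \<Rightarrow> (nat \<Rightarrow> bool) \<Rightarrow> real) \<Rightarrow> (nat \<Rightarrow> nat) \<Rightarrow> (nat \<Rightarrow> nat \<Rightarrow> real) \<Rightarrow> bool" where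
  "product_game m U v a \<longleftrightarrow>
     (\<forall>i\<in>{1..m}. v i \<in> {0,1}) \<and>
     (\<forall>i\<in>{1..m}. \<forall>j\<in>{1..m}. i \<noteq> j \<longrightarrow> 0 < a i j \<and> a i j < 1) \<and>
     (\<forall>j\<in>{1..m}. \<forall>i1\<in>{1..m}. \<forall>i2\<in>{1..m}.
         i1 \<noteq> i2 \<and> i1 \<noteq> j \<and> i2 \<noteq> j \<longrightarrow> a i1 j \<noteq> a i2 j) \<and>
     (\<forall>i\<in>{1..m}. \<forall>\<gamma>\<in>mixed m.
         lam m U i \<gamma> = (-1) ^ v i * (\<Prod>j\<in>{1..m} - {i}. (\<gamma> j - a i j)))"

definition assoc_perm :: "nat \<Rightarrow> (nat \<Rightarrow> nat \<Rightarrow> real) \<Rightarrow> nat \<Rightarrow> (nat \<Rightarrow> nat) \<Rightarrow> bool" where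
  "assoc_perm m a j s \<longleftrightarrow> s permutes {1..m} \<and> s j = j \<and>
     (\<forall>i\<in>{1..m} - {j}. \<forall>i'\<in>{1..m} - {j}. s i < s i' \<longleftrightarrow> a i j > a i' j)"

definition fixpts :: "nat \<Rightarrow> (nat \<Rightarrow> nat) \<Rightarrow> nat set" where
  "fixpts m \<pi> = {i\<in>{1..m}. \<pi> i = i}"

definition EC :: "nat \<Rightarrow> (nat \<Rightarrow> nat \<Rightarrow> real) \<Rightarrow> (nat \<Rightarrow> nat) \<Rightarrow> (nat \<Rightarrow> real) set" where
  "EC m a \<pi> = {\<gamma>\<in>mixed m. Lset m \<gamma> = fixpts m \<pi> \<and>
                 (\<forall>j\<in>{1..m} - fixpts m \<pi>. \<gamma> j = a (\<pi> j) j)}"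

definition chi :: "nat \<Rightarrow> nat \<Rightarrow> nat" where
  "chi x y = (if x \<ge> y then 1 else 0)"

text \<open>Increment map; gamma^i (which lies in {0,1} for i in F(pi)) is read as the natural number nat (floor gamma^i).\<close>
definition Inc :: "nat \<Rightarrow> (nat \<Rightarrow> nat) \<Rightarrow> (nat \<Rightarrow> nat \<Rightarrow> nat) \<Rightarrow> (nat \<Rightarrow> nat) \<Rightarrow> (nat \<Rightarrow> real) \<Rightarrow> nat \<Rightarrow> nat" where
  "Inc m v \<sigma> \<pi> \<gamma> i =
     (1 + nat \<lfloor>\<gamma> i\<rfloor> + v i + card (L0 m \<gamma> - {i})
        + (\<Sum>j\<in>{1..m} - fixpts m \<pi>. chi (\<sigma> j (\<pi> j)) (\<sigma> j i))) mod 2"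

definition gpt :: "nat \<Rightarrow> (nat \<Rightarrow> nat \<Rightarrow> real) \<Rightarrow> (nat \<Rightarrow> nat) \<Rightarrow> nat \<Rightarrow> real" where
  "gpt m a \<pi> = (\<lambda>i\<in>{1..m}. if \<pi> i = i then 1 else a (\<pi> i) i)"

end

theory Submission
  imports Defs
begin

text \<open>On EC(\<pi>) every non-fixed player k plays \<gamma>^k = a^{\<pi>(k)}_k, so for a non-fixed j the
  factor \<gamma>^k - a^j_k of \<lambda>^j with k = \<pi>^{-1}(j) vanishes and j is indifferent. For a fixed
  player i no factor of \<lambda>^i vanishes, and the negative ones are counted: a fixed j is negative
  iff \<gamma>^j = 0, a non-fixed j iff a^{\<pi>(j)}_j < a^i_j, i.e. iff \<sigma>^j(\<pi>(j)) \<ge> \<sigma>^j(i). So the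
  best-response condition of i is a parity condition, namely Inc(\<gamma>, i) = 0. Since
  1 + \<gamma>^i + |L_0(\<gamma>) - {i}| \<equiv> |L_0(\<gamma>)| (mod 2), Inc(\<gamma>, i) differs from Inc(g(\<pi>), i) exactly
  by the parity of |L_0(\<gamma>)|. Toggling one fixed coordinate between 0 and 1 is an involution
  of EC(\<pi>) reversing that parity, which gives the halving.\<close>

lemma prod_eq_neg_one_power_card_neg:
  fixes f :: "'a \<Rightarrow> 'b::linordered_idom"
  assumes "finite A"
  shows "prod f A = (-1) ^ card {x\<in>A. f x < 0} * (\<Prod>x\<in>A. \<bar>f x\<bar>)"
  using assms
proof (induction A rule: finite_induct)
  case (insert x A)
  have "{y\<in>insert x A. f y < 0} = (if f x < 0 then insert x {y\<in>A. f y < 0} else {y\<in>A. f y < 0})"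
    by auto
  with insert show ?case
    by (auto simp: abs_if)
qed simp

lemma card_half_by_involution:
  assumes "finite E"
    and "\<And>x. x \<in> E \<Longrightarrow> \<phi> x \<in> E" "\<And>x. x \<in> E \<Longrightarrow> \<phi> (\<phi> x) = x"
    and "\<And>x. x \<in> E \<Longrightarrow> Q (\<phi> x) \<longleftrightarrow> \<not> Q x"
  shows "2 * card {x\<in>E. Q x} = card E"
proof -
  have "bij_betw \<phi> {x\<in>E. Q x} {x\<in>E. \<not> Q x}"
    by (rule bij_betw_byWitness[where f' = \<phi>]) (use assms in auto)
  then have "card {x\<in>E. Q x} = card {x\<in>E. \<not> Q x}"
    by (rule bij_betw_same_card)
  moreover have "card E = card {x\<in>E. Q x} + card {x\<in>E. \<not> Q x}"
    using assms(1) by (subst card_Un_disjoint[symmetric]) (auto intro: arg_cong[where f = card])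
  ultimately show ?thesis
    by simp
qed

lemma mod2_add_eq_self_iff: "(x::nat) < 2 \<Longrightarrow> (c + x) mod 2 = x \<longleftrightarrow> even c"
  by presburger

lemma mod2_add_odd: "odd (c::nat) \<Longrightarrow> (c + x) mod 2 = (1 + x) mod 2"
  by presburger

lemma mod2_add_eq_0_iff: "((c0::nat) + x) mod 2 = 0 \<Longrightarrow> (c + x) mod 2 = 0 \<longleftrightarrow> even (c + c0)"
  by presburger

lemma product_game_coeff_bounds:
  "product_game m U v a \<Longrightarrow> i \<in> {1..m} \<Longrightarrow> j \<in> {1..m} \<Longrightarrow> i \<noteq> j \<Longrightarrow> 0 < a i j \<and> a i j < 1"
  unfolding product_game_def by blast

lemma product_game_coeff_distinct:
  "product_game m U v a \<Longrightarrow> j \<in> {1..m} \<Longrightarrow> i1 \<in> {1..m} \<Longrightarrow> i2 \<in> {1..m} \<Longrightarrow>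
    i1 \<noteq> i2 \<Longrightarrow> i1 \<noteq> j \<Longrightarrow> i2 \<noteq> j \<Longrightarrow> a i1 j \<noteq> a i2 j"
  unfolding product_game_def by blast

lemma product_game_lam:
  "product_game m U v a \<Longrightarrow> i \<in> {1..m} \<Longrightarrow> \<gamma> \<in> mixed m \<Longrightarrow>
    lam m U i \<gamma> = (-1) ^ v i * (\<Prod>j\<in>{1..m} - {i}. \<gamma> j - a i j)"
  unfolding product_game_def by blast

lemma fixpts_subset: "fixpts m \<pi> \<subseteq> {1..m}"
  by (auto simp: fixpts_def)

lemma permutes_image_nonfixed:
  assumes "\<pi> permutes {1..m}" and "j \<in> {1..m} - fixpts m \<pi>"
  shows "\<pi> j \<in> {1..m} - fixpts m \<pi>"
proof -
  have "\<pi> j \<in> {1..m}"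
    using assms permutes_in_image[OF assms(1)] by blast
  moreover have "\<pi> (\<pi> j) \<noteq> \<pi> j"
    using assms by (simp add: fixpts_def permutes_inj inj_eq)
  ultimately show ?thesis
    by (simp add: fixpts_def)
qed

lemma coeff_nonfixed_bounds:
  assumes "product_game m U v a" "\<pi> permutes {1..m}" "j \<in> {1..m} - fixpts m \<pi>"
  shows "0 < a (\<pi> j) j \<and> a (\<pi> j) j < 1"
  using product_game_coeff_bounds[OF assms(1)] permutes_image_nonfixed[OF assms(2,3)] assms(3)
  by (auto simp: fixpts_def)

lemma mem_EC_iff:
  assumes "product_game m U v a" and "\<pi> permutes {1..m}"
  shows "\<gamma> \<in> EC m a \<pi> \<longleftrightarrow> \<gamma> \<in> mixed m \<and> (\<forall>i\<in>fixpts m \<pi>. \<gamma> i = 0 \<or> \<gamma> i = 1)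
           \<and> (\<forall>j\<in>{1..m} - fixpts m \<pi>. \<gamma> j = a (\<pi> j) j)"
proof -
  have "\<gamma> j \<noteq> 0 \<and> \<gamma> j \<noteq> 1" if "j \<in> {1..m} - fixpts m \<pi>" "\<gamma> j = a (\<pi> j) j" for j
    using coeff_nonfixed_bounds[OF assms that(1)] that(2) by auto
  then show ?thesis
    using fixpts_subset[of m \<pi>] unfolding EC_def Lset_def L0_def L1_def by blast
qed

lemma EC_fixpt_zero_or_one: "\<gamma> \<in> EC m a \<pi> \<Longrightarrow> i \<in> fixpts m \<pi> \<Longrightarrow> \<gamma> i = 0 \<or> \<gamma> i = 1"
  unfolding EC_def Lset_def L0_def L1_def by blast

lemma L0_subset_fixpts: "\<gamma> \<in> EC m a \<pi> \<Longrightarrow> L0 m \<gamma> \<subseteq> fixpts m \<pi>"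
  unfolding EC_def Lset_def by blast

lemma finite_L0: "finite (L0 m \<gamma>)"
  by (simp add: L0_def)

lemma finite_EC:
  assumes "product_game m U v a" and "\<pi> permutes {1..m}"
  shows "finite (EC m a \<pi>)"
proof (rule finite_subset)
  show "EC m a \<pi> \<subseteq> PiE {1..m} (\<lambda>j. {0, 1, a (\<pi> j) j})"
  proof
    fix \<gamma>
    assume "\<gamma> \<in> EC m a \<pi>"
    then have "\<gamma> \<in> mixed m" "\<forall>j\<in>{1..m} - fixpts m \<pi>. \<gamma> j = a (\<pi> j) j"
      "\<forall>i\<in>fixpts m \<pi>. \<gamma> i = 0 \<or> \<gamma> i = 1"
      by (simp_all add: mem_EC_iff[OF assms])
    then show "\<gamma> \<in> PiE {1..m} (\<lambda>j. {0, 1, a (\<pi> j) j})"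
      unfolding mixed_def PiE_iff by blast
  qed
qed (simp add: finite_PiE)

lemma lam_eq_0_nonfixed:
  assumes pg: "product_game m U v a" and perm: "\<pi> permutes {1..m}"
    and \<gamma>: "\<gamma> \<in> EC m a \<pi>" and j: "j \<in> {1..m} - fixpts m \<pi>"
  shows "lam m U j \<gamma> = 0"
proof -
  define k where "k = inv \<pi> j"
  have "\<pi> k = j"
    by (simp add: k_def permutes_inverses(1)[OF perm])
  moreover have "k \<in> {1..m}"
    using j permutes_in_image[OF permutes_inv[OF perm]] unfolding k_def by blast
  ultimately have k: "k \<in> {1..m} - fixpts m \<pi>" "k \<noteq> j"
    using j by (auto simp: fixpts_def)
  have "\<gamma> k - a j k = 0"
    using \<gamma> k \<open>\<pi> k = j\<close> by (simp add: mem_EC_iff[OF pg perm])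
  then have "(\<Prod>i\<in>{1..m} - {j}. \<gamma> i - a j i) = 0"
    using k by (intro prod_zero) auto
  then show ?thesis
    using product_game_lam[OF pg] j \<gamma> by (simp add: EC_def)
qed

lemma nonfixed_factor_sign:
  assumes pg: "product_game m U v a" and perm: "\<pi> permutes {1..m}"
    and \<sigma>: "\<forall>j\<in>{1..m}. assoc_perm m a j (\<sigma> j)"
    and i: "i \<in> fixpts m \<pi>" and j: "j \<in> {1..m} - fixpts m \<pi>"
  shows "a (\<pi> j) j - a i j \<noteq> 0"
    and "a (\<pi> j) j - a i j < 0 \<longleftrightarrow> chi (\<sigma> j (\<pi> j)) (\<sigma> j i) = 1"
proof -
  have \<pi>j: "\<pi> j \<in> {1..m}" "\<pi> j \<noteq> j" "\<pi> j \<noteq> i"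
    using permutes_image_nonfixed[OF perm j] i j by (auto simp: fixpts_def)
  have ij: "i \<in> {1..m}" "i \<noteq> j"
    using i j by (auto simp: fixpts_def)
  show "a (\<pi> j) j - a i j \<noteq> 0"
    using product_game_coeff_distinct[OF pg _ \<pi>j(1) ij(1) \<pi>j(3) \<pi>j(2)] ij j by auto
  have \<sigma>j: "assoc_perm m a j (\<sigma> j)"
    using \<sigma> j by blast
  have "\<sigma> j (\<pi> j) \<noteq> \<sigma> j i"
    using \<sigma>j \<pi>j(3) by (auto simp: assoc_perm_def dest: permutes_inj injD)
  moreover have "\<sigma> j i < \<sigma> j (\<pi> j) \<longleftrightarrow> a (\<pi> j) j < a i j"
    using \<sigma>j \<pi>j ij unfolding assoc_perm_def by blast
  ultimately show "a (\<pi> j) j - a i j < 0 \<longleftrightarrow> chi (\<sigma> j (\<pi> j)) (\<sigma> j i) = 1"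
    by (auto simp: chi_def)
qed

lemma card_neg_factors:
  assumes pg: "product_game m U v a" and perm: "\<pi> permutes {1..m}"
    and \<sigma>: "\<forall>j\<in>{1..m}. assoc_perm m a j (\<sigma> j)"
    and \<gamma>: "\<gamma> \<in> EC m a \<pi>" and i: "i \<in> fixpts m \<pi>"
  shows "card {j\<in>{1..m} - {i}. \<gamma> j - a i j < 0}
           = card (L0 m \<gamma> - {i}) + (\<Sum>j\<in>{1..m} - fixpts m \<pi>. chi (\<sigma> j (\<pi> j)) (\<sigma> j i))"
proof -
  let ?C = "{j\<in>{1..m} - fixpts m \<pi>. chi (\<sigma> j (\<pi> j)) (\<sigma> j i) = 1}"
  have fixed: "\<gamma> j - a i j < 0 \<longleftrightarrow> j \<in> L0 m \<gamma>" if j: "j \<in> fixpts m \<pi> - {i}" for j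
  proof -
    have "0 < a i j \<and> a i j < 1"
      using product_game_coeff_bounds[OF pg] i j by (auto simp: fixpts_def)
    then show ?thesis
      using EC_fixpt_zero_or_one[OF \<gamma>, of j] j by (auto simp: L0_def fixpts_def)
  qed
  have nonfixed: "\<gamma> j - a i j < 0 \<longleftrightarrow> j \<in> ?C" if j: "j \<in> {1..m} - fixpts m \<pi>" for j
    using nonfixed_factor_sign(2)[OF pg perm \<sigma> i j] j \<gamma> by (simp add: mem_EC_iff[OF pg perm])
  have "{j\<in>{1..m} - {i}. \<gamma> j - a i j < 0} = (L0 m \<gamma> - {i}) \<union> ?C"
  proof (intro equalityI subsetI)
    fix j
    assume "j \<in> {j\<in>{1..m} - {i}. \<gamma> j - a i j < 0}"
    then show "j \<in> (L0 m \<gamma> - {i}) \<union> ?C"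
      using fixed nonfixed by (cases "j \<in> fixpts m \<pi>") auto
  next
    fix j
    assume "j \<in> (L0 m \<gamma> - {i}) \<union> ?C"
    then show "j \<in> {j\<in>{1..m} - {i}. \<gamma> j - a i j < 0}"
      using fixed nonfixed L0_subset_fixpts[OF \<gamma>] fixpts_subset[of m \<pi>] i by blast
  qed
  moreover have "(L0 m \<gamma> - {i}) \<inter> ?C = {}"
    using L0_subset_fixpts[OF \<gamma>] by blast
  moreover have "(\<Sum>j\<in>{1..m} - fixpts m \<pi>. chi (\<sigma> j (\<pi> j)) (\<sigma> j i)) = card ?C"
    by (simp add: chi_def of_bool_def[symmetric] Int_def) (auto intro: arg_cong[where f = card])
  ultimately show ?thesis
    by (simp add: card_Un_disjoint finite_L0)
qed

lemma sgn_lam_fixpt: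
  assumes pg: "product_game m U v a" and perm: "\<pi> permutes {1..m}"
    and \<sigma>: "\<forall>j\<in>{1..m}. assoc_perm m a j (\<sigma> j)"
    and \<gamma>: "\<gamma> \<in> EC m a \<pi>" and i: "i \<in> fixpts m \<pi>"
  shows "sgn (lam m U i \<gamma>) =
    (-1) ^ (v i + card (L0 m \<gamma> - {i}) + (\<Sum>j\<in>{1..m} - fixpts m \<pi>. chi (\<sigma> j (\<pi> j)) (\<sigma> j i)))"
proof -
  have iA: "i \<in> {1..m}"
    using i by (simp add: fixpts_def)
  have "\<gamma> j - a i j \<noteq> 0" if "j \<in> {1..m} - {i}" for j
  proof (cases "j \<in> fixpts m \<pi>")
    case True
    then show ?thesis
      using EC_fixpt_zero_or_one[OF \<gamma>] product_game_coeff_bounds[OF pg iA] that by force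
  next
    case False
    with that have j: "j \<in> {1..m} - fixpts m \<pi>"
      by blast
    then show ?thesis
      using nonfixed_factor_sign(1)[OF pg perm \<sigma> i j] \<gamma>
      by (auto simp: mem_EC_iff[OF pg perm])
  qed
  then have P: "(\<Prod>j\<in>{1..m} - {i}. \<bar>\<gamma> j - a i j\<bar>) > 0"
    by (intro prod_pos) auto
  have "lam m U i \<gamma> = (-1) ^ v i * (\<Prod>j\<in>{1..m} - {i}. \<gamma> j - a i j)"
    using product_game_lam[OF pg iA] \<gamma> by (simp add: EC_def)
  also have "\<dots> = (-1) ^ v i * ((-1) ^ card {j\<in>{1..m} - {i}. \<gamma> j - a i j < 0}
                       * (\<Prod>j\<in>{1..m} - {i}. \<bar>\<gamma> j - a i j\<bar>))"
    by (subst prod_eq_neg_one_power_card_neg) simp_all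
  also have "\<dots> = (-1) ^ v i * ((-1) ^ (card (L0 m \<gamma> - {i})
                       + (\<Sum>j\<in>{1..m} - fixpts m \<pi>. chi (\<sigma> j (\<pi> j)) (\<sigma> j i)))
                       * (\<Prod>j\<in>{1..m} - {i}. \<bar>\<gamma> j - a i j\<bar>))"
    by (simp only: card_neg_factors[OF pg perm \<sigma> \<gamma> i])
  finally show ?thesis
    using P by (simp add: sgn_mult power_add)
qed

lemma best_response_fixpt_iff_Inc:
  assumes pg: "product_game m U v a" and perm: "\<pi> permutes {1..m}"
    and \<sigma>: "\<forall>j\<in>{1..m}. assoc_perm m a j (\<sigma> j)"
    and \<gamma>: "\<gamma> \<in> EC m a \<pi>" and i: "i \<in> fixpts m \<pi>"
  shows "(0 < \<gamma> i \<and> \<gamma> i < 1 \<longrightarrow> lam m U i \<gamma> = 0)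
          \<and> (\<gamma> i = 0 \<longrightarrow> lam m U i \<gamma> \<le> 0) \<and> (\<gamma> i = 1 \<longrightarrow> lam m U i \<gamma> \<ge> 0)
         \<longleftrightarrow> Inc m v \<sigma> \<pi> \<gamma> i = 0"
proof -
  define E where "E = v i + card (L0 m \<gamma> - {i}) + (\<Sum>j\<in>{1..m} - fixpts m \<pi>. chi (\<sigma> j (\<pi> j)) (\<sigma> j i))"
  have "sgn (lam m U i \<gamma>) = (-1) ^ E"
    unfolding E_def by (rule sgn_lam_fixpt[OF pg perm \<sigma> \<gamma> i])
  then have sign: "0 < lam m U i \<gamma> \<longleftrightarrow> even E" "lam m U i \<gamma> < 0 \<longleftrightarrow> odd E"
    by (cases "even E"; simp add: sgn_1_pos sgn_1_neg)+
  have Inc: "Inc m v \<sigma> \<pi> \<gamma> i = (1 + nat \<lfloor>\<gamma> i\<rfloor> + E) mod 2"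
    unfolding Inc_def E_def by (simp add: add.assoc)
  show ?thesis
    using EC_fixpt_zero_or_one[OF \<gamma> i] sign Inc by (auto simp: not_less[symmetric])
qed

lemma nash_iff_Inc:
  assumes pg: "product_game m U v a" and perm: "\<pi> permutes {1..m}"
    and \<sigma>: "\<forall>j\<in>{1..m}. assoc_perm m a j (\<sigma> j)"
    and \<gamma>: "\<gamma> \<in> EC m a \<pi>"
  shows "nash m U \<gamma> \<longleftrightarrow> (\<forall>i\<in>fixpts m \<pi>. Inc m v \<sigma> \<pi> \<gamma> i = 0)"
proof -
  have "0 < \<gamma> j \<and> \<gamma> j < 1 \<and> lam m U j \<gamma> = 0" if "j \<in> {1..m} - fixpts m \<pi>" for j
    using coeff_nonfixed_bounds[OF pg perm that] lam_eq_0_nonfixed[OF pg perm \<gamma> that] \<gamma> that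
    by (simp add: mem_EC_iff[OF pg perm])
  moreover have "\<gamma> \<in> mixed m"
    using \<gamma> by (simp add: EC_def)
  ultimately show ?thesis
    using best_response_fixpt_iff_Inc[OF pg perm \<sigma> \<gamma>] fixpts_subset[of m \<pi>]
    unfolding nash_def by (smt (verit) Diff_iff subsetD)
qed

lemma gpt_in_EC:
  assumes "product_game m U v a" and "\<pi> permutes {1..m}"
  shows "gpt m a \<pi> \<in> EC m a \<pi>"
proof -
  have "(if \<pi> j = j then 1 else a (\<pi> j) j) \<in> {0..1}" if "j \<in> {1..m}" for j
    using coeff_nonfixed_bounds[OF assms, of j] that by (auto simp: fixpts_def)
  then have "gpt m a \<pi> \<in> mixed m"
    unfolding mixed_def gpt_def by (simp add: restrict_PiE_iff)
  moreover have "\<forall>j\<in>{1..m} - fixpts m \<pi>. gpt m a \<pi> j = a (\<pi> j) j"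
    and "\<forall>i\<in>fixpts m \<pi>. gpt m a \<pi> i = 1"
    by (auto simp: gpt_def fixpts_def)
  ultimately show ?thesis
    unfolding mem_EC_iff[OF assms] by blast
qed

lemma L0_gpt:
  assumes "product_game m U v a" and "\<pi> permutes {1..m}"
  shows "L0 m (gpt m a \<pi>) = {}"
proof -
  have "gpt m a \<pi> j \<noteq> 0" if "j \<in> {1..m}" for j
    using coeff_nonfixed_bounds[OF assms, of j] that by (auto simp: gpt_def fixpts_def)
  then show ?thesis
    unfolding L0_def by blast
qed

lemma Inc_eq_card_L0:
  assumes \<gamma>: "\<gamma> \<in> EC m a \<pi>" and i: "i \<in> fixpts m \<pi>"
  shows "Inc m v \<sigma> \<pi> \<gamma> i
    = (card (L0 m \<gamma>) + v i + (\<Sum>j\<in>{1..m} - fixpts m \<pi>. chi (\<sigma> j (\<pi> j)) (\<sigma> j i))) mod 2"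
    (is "_ = (_ + _ + ?S) mod 2")
  using EC_fixpt_zero_or_one[OF \<gamma> i]
proof
  assume "\<gamma> i = 0"
  then have "i \<in> L0 m \<gamma>"
    using i by (simp add: L0_def fixpts_def)
  then have "card (L0 m \<gamma>) = Suc (card (L0 m \<gamma> - {i}))"
    by (metis card_Suc_Diff1 finite_L0)
  with \<open>\<gamma> i = 0\<close> have "1 + nat \<lfloor>\<gamma> i\<rfloor> + v i + card (L0 m \<gamma> - {i}) + ?S = card (L0 m \<gamma>) + v i + ?S"
    by simp
  then show ?thesis
    by (simp only: Inc_def)
next
  assume "\<gamma> i = 1"
  then have "i \<notin> L0 m \<gamma>"
    by (simp add: L0_def)
  with \<open>\<gamma> i = 1\<close> have "1 + nat \<lfloor>\<gamma> i\<rfloor> + v i + card (L0 m \<gamma> - {i}) + ?S = card (L0 m \<gamma>) + v i + ?S + 2"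
    by simp
  then show ?thesis
    by (simp only: Inc_def mod_add_self2)
qed

lemma Inc_eq_Inc_gpt:
  assumes pg: "product_game m U v a" and perm: "\<pi> permutes {1..m}"
    and \<gamma>: "\<gamma> \<in> EC m a \<pi>" and i: "i \<in> fixpts m \<pi>"
  shows "Inc m v \<sigma> \<pi> \<gamma> i = (card (L0 m \<gamma>) + Inc m v \<sigma> \<pi> (gpt m a \<pi>) i) mod 2"
  using Inc_eq_card_L0[OF \<gamma> i] Inc_eq_card_L0[OF gpt_in_EC[OF pg perm] i]
  by (simp only: L0_gpt[OF pg perm] card.empty add_0 mod_add_right_eq add.assoc)

lemma Inc_eq_Inc_gpt_iff_even:
  assumes pg: "product_game m U v a" and perm: "\<pi> permutes {1..m}"
    and \<gamma>: "\<gamma> \<in> EC m a \<pi>" and F: "fixpts m \<pi> \<noteq> {}"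
  shows "(\<forall>i\<in>fixpts m \<pi>. Inc m v \<sigma> \<pi> \<gamma> i = Inc m v \<sigma> \<pi> (gpt m a \<pi>) i)
           \<longleftrightarrow> even (card (L0 m \<gamma>))"
proof -
  have "Inc m v \<sigma> \<pi> \<gamma> i = Inc m v \<sigma> \<pi> (gpt m a \<pi>) i \<longleftrightarrow> even (card (L0 m \<gamma>))"
    if i: "i \<in> fixpts m \<pi>" for i
  proof -
    have "Inc m v \<sigma> \<pi> (gpt m a \<pi>) i < 2"
      by (simp add: Inc_def)
    then show ?thesis
      unfolding Inc_eq_Inc_gpt[OF pg perm \<gamma> i] by (rule mod2_add_eq_self_iff)
  qed
  then show ?thesis
    using F by blast
qed

lemma Inc_opposite_if_odd:
  assumes pg: "product_game m U v a" and perm: "\<pi> permutes {1..m}"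
    and \<gamma>: "\<gamma> \<in> EC m a \<pi>" and odd: "odd (card (L0 m \<gamma>))" and i: "i \<in> fixpts m \<pi>"
  shows "Inc m v \<sigma> \<pi> \<gamma> i = (1 + Inc m v \<sigma> \<pi> (gpt m a \<pi>) i) mod 2"
  unfolding Inc_eq_Inc_gpt[OF pg perm \<gamma> i] using odd by (rule mod2_add_odd)

lemma toggle_in_EC:
  assumes pg: "product_game m U v a" and perm: "\<pi> permutes {1..m}"
    and \<gamma>: "\<gamma> \<in> EC m a \<pi>" and i: "i \<in> fixpts m \<pi>"
  shows "\<gamma>(i := 1 - \<gamma> i) \<in> EC m a \<pi>"
proof -
  have "\<gamma> \<in> mixed m" "\<forall>k\<in>fixpts m \<pi>. \<gamma> k = 0 \<or> \<gamma> k = 1"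
    "\<forall>j\<in>{1..m} - fixpts m \<pi>. \<gamma> j = a (\<pi> j) j"
    using \<gamma> by (simp_all add: mem_EC_iff[OF pg perm])
  moreover have "i \<in> {1..m}"
    using i by (simp add: fixpts_def)
  ultimately show ?thesis
    using i unfolding mem_EC_iff[OF pg perm] mixed_def PiE_iff extensional_def by auto
qed

lemma even_card_L0_toggle_iff:
  assumes "i \<in> {1..m}" and "\<gamma> i = 0 \<or> \<gamma> i = 1"
  shows "even (card (L0 m (\<gamma>(i := 1 - \<gamma> i)))) \<longleftrightarrow> odd (card (L0 m \<gamma>))"
  using assms(2)
proof
  assume "\<gamma> i = 0"
  then have "L0 m (\<gamma>(i := 1 - \<gamma> i)) = L0 m \<gamma> - {i}" and "i \<in> L0 m \<gamma>"
    using assms(1) by (auto simp: L0_def)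
  then show ?thesis
    by (metis card_Suc_Diff1 finite_L0 even_Suc)
next
  assume "\<gamma> i = 1"
  then have "L0 m (\<gamma>(i := 1 - \<gamma> i)) = insert i (L0 m \<gamma>)" and "i \<notin> L0 m \<gamma>"
    using assms(1) by (auto simp: L0_def)
  then show ?thesis
    by (simp add: finite_L0)
qed

lemma nash_iff_even_card_L0:
  assumes pg: "product_game m U v a" and perm: "\<pi> permutes {1..m}"
    and \<sigma>: "\<forall>j\<in>{1..m}. assoc_perm m a j (\<sigma> j)" and F: "fixpts m \<pi> \<noteq> {}"
    and \<gamma>\<^sub>0: "\<gamma>\<^sub>0 \<in> EC m a \<pi>" "nash m U \<gamma>\<^sub>0" and \<gamma>: "\<gamma> \<in> EC m a \<pi>"
  shows "nash m U \<gamma> \<longleftrightarrow> even (card (L0 m \<gamma>) + card (L0 m \<gamma>\<^sub>0))"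
proof -
  have "Inc m v \<sigma> \<pi> \<gamma> i = 0 \<longleftrightarrow> even (card (L0 m \<gamma>) + card (L0 m \<gamma>\<^sub>0))"
    if i: "i \<in> fixpts m \<pi>" for i
  proof -
    have "(card (L0 m \<gamma>\<^sub>0) + Inc m v \<sigma> \<pi> (gpt m a \<pi>) i) mod 2 = 0"
      using \<gamma>\<^sub>0 i nash_iff_Inc[OF pg perm \<sigma> \<gamma>\<^sub>0(1)] Inc_eq_Inc_gpt[where \<sigma> = \<sigma>, OF pg perm \<gamma>\<^sub>0(1) i]
      by simp
    then show ?thesis
      unfolding Inc_eq_Inc_gpt[OF pg perm \<gamma> i] by (rule mod2_add_eq_0_iff)
  qed
  then show ?thesis
    using nash_iff_Inc[OF pg perm \<sigma> \<gamma>] F by blast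
qed

lemma nash_none_or_half:
  assumes pg: "product_game m U v a" and perm: "\<pi> permutes {1..m}"
    and \<sigma>: "\<forall>j\<in>{1..m}. assoc_perm m a j (\<sigma> j)" and F: "fixpts m \<pi> \<noteq> {}"
  shows "(\<forall>\<gamma>\<in>EC m a \<pi>. \<not> nash m U \<gamma>) \<or> 2 * card {\<gamma>\<in>EC m a \<pi>. nash m U \<gamma>} = card (EC m a \<pi>)"
proof (cases "\<exists>\<gamma>\<^sub>0\<in>EC m a \<pi>. nash m U \<gamma>\<^sub>0")
  case True
  then obtain \<gamma>\<^sub>0 where \<gamma>\<^sub>0: "\<gamma>\<^sub>0 \<in> EC m a \<pi>" "nash m U \<gamma>\<^sub>0"
    by blast
  obtain i where i: "i \<in> fixpts m \<pi>"
    using F by blast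
  then have iA: "i \<in> {1..m}"
    by (simp add: fixpts_def)
  have "2 * card {\<gamma>\<in>EC m a \<pi>. nash m U \<gamma>} = card (EC m a \<pi>)"
  proof (rule card_half_by_involution[where \<phi> = "\<lambda>\<gamma>. \<gamma>(i := 1 - \<gamma> i)"])
    fix \<gamma>
    assume \<gamma>: "\<gamma> \<in> EC m a \<pi>"
    show "\<gamma>(i := 1 - \<gamma> i) \<in> EC m a \<pi>"
      by (rule toggle_in_EC[OF pg perm \<gamma> i])
    show "(\<gamma>(i := 1 - \<gamma> i))(i := 1 - (\<gamma>(i := 1 - \<gamma> i)) i) = \<gamma>"
      by simp
    show "nash m U (\<gamma>(i := 1 - \<gamma> i)) \<longleftrightarrow> \<not> nash m U \<gamma>"
      using nash_iff_even_card_L0[OF pg perm \<sigma> F \<gamma>\<^sub>0] toggle_in_EC[OF pg perm \<gamma> i] \<gamma>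
        even_card_L0_toggle_iff[where \<gamma> = \<gamma>, OF iA EC_fixpt_zero_or_one[OF \<gamma> i]]
      by auto
  qed (rule finite_EC[OF pg perm])
  then show ?thesis
    by blast
qed blast

theorem theorem3p7:
  fixes m :: nat and U :: "nat \<Rightarrow> (nat \<Rightarrow> bool) \<Rightarrow> real"
    and v :: "nat \<Rightarrow> nat" and a :: "nat \<Rightarrow> nat \<Rightarrow> real"
    and \<sigma> :: "nat \<Rightarrow> nat \<Rightarrow> nat" and \<pi> :: "nat \<Rightarrow> nat"
  assumes "m \<ge> 1"
    and "product_game m U v a"
    and "\<forall>j\<in>{1..m}. assoc_perm m a j (\<sigma> j)"
    and "\<pi> permutes {1..m}"
    and "fixpts m \<pi> \<noteq> {}"
  shows "(\<forall>\<gamma>\<in>EC m a \<pi>. nash m U \<gamma> \<longleftrightarrow> (\<forall>i\<in>fixpts m \<pi>. Inc m v \<sigma> \<pi> \<gamma> i = 0))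
    \<and> gpt m a \<pi> \<in> EC m a \<pi>
    \<and> (\<forall>\<gamma>\<in>EC m a \<pi>.
          (\<forall>i\<in>fixpts m \<pi>. Inc m v \<sigma> \<pi> \<gamma> i = Inc m v \<sigma> \<pi> (gpt m a \<pi>) i)
        \<or> (\<forall>i\<in>fixpts m \<pi>. Inc m v \<sigma> \<pi> \<gamma> i = (1 + Inc m v \<sigma> \<pi> (gpt m a \<pi>) i) mod 2))
    \<and> (\<forall>\<gamma>\<in>EC m a \<pi>.
          (\<forall>i\<in>fixpts m \<pi>. Inc m v \<sigma> \<pi> \<gamma> i = Inc m v \<sigma> \<pi> (gpt m a \<pi>) i)
          \<longleftrightarrow> even (card (L0 m \<gamma>)))
    \<and> finite (EC m a \<pi>)
    \<and> ((\<forall>\<gamma>\<in>EC m a \<pi>. \<not> nash m U \<gamma>)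
        \<or> 2 * card {\<gamma>\<in>EC m a \<pi>. nash m U \<gamma>} = card (EC m a \<pi>))"
proof -
  note pg = assms(2) and \<sigma> = assms(3) and perm = assms(4) and F = assms(5)
  have two_values: "(\<forall>i\<in>fixpts m \<pi>. Inc m v \<sigma> \<pi> \<gamma> i = Inc m v \<sigma> \<pi> (gpt m a \<pi>) i)
      \<or> (\<forall>i\<in>fixpts m \<pi>. Inc m v \<sigma> \<pi> \<gamma> i = (1 + Inc m v \<sigma> \<pi> (gpt m a \<pi>) i) mod 2)"
    if \<gamma>: "\<gamma> \<in> EC m a \<pi>" for \<gamma>
    using Inc_eq_Inc_gpt_iff_even[OF pg perm \<gamma> F] Inc_opposite_if_odd[OF pg perm \<gamma>] by blast
  show ?thesis
    using nash_iff_Inc[OF pg perm \<sigma>] gpt_in_EC[OF pg perm] two_values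
      Inc_eq_Inc_gpt_iff_even[OF pg perm _ F] finite_EC[OF pg perm] nash_none_or_half[OF pg perm \<sigma> F]
    by blast
qed

end
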